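(* Let $G=C_3^3$ with basis $(e_1,e_2,e_3)$, let $e_0=e_1+e_2+e_3$, and let $U=e_1^2e_2^2e_3^2e_0$ (a sequence of length $7$). Then for every $k\in\mathbb N$, \[ \mathsf L(U^{3k})=3k+2\cdot[0,2k]. \] In particular $\max\mathsf L(U^{3k})/\min\mathsf L(U^{3k})=7/3$ for every $k\in\mathbb N$.
   Context: $C_3^3$ denotes the elementary abelian $3$-group of rank $3$. $[a,b]=\{x\in\mathbb Z:a\le x\le b\}$, $y+L=\{y+a:a\in L\}$, $k\cdot L=\{ka:a\in L\}$. For a finite abelian group $G$, a sequence over $G$ is an element of the free abelian monoid $\mathcal F(G)$ with basis $G$ (a finite unordered list of elements of $G$, repetitions allowed; $e_1^2$ means $e_1$ occurring twice, and $U^{3k}$ is the $3k$-fold product of $U$). $\mathcal B(G)$ is the monoid of zero-sum sequences over $G$. An atom is a minimal zero-sum sequence, i.e. a nonempty zero-sum sequence that is not a product of two nonempty zero-sum sequences. For $B\in\mathcal B(G)$, $\mathsf L(B)=\{k\in\mathbb N_0: B \text{ is a product of } k \text{ atoms}\}$. *)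

theory Defs
  imports Complex_Main "HOL-Library.Numeral_Type" "HOL-Library.Product_Plus" "HOL-Library.Multiset"
begin

type_synonym G = "3 \<times> 3 \<times> 3"

definition nsmul :: "nat \<Rightarrow> 'a::comm_monoid_add \<Rightarrow> 'a" where
  "nsmul n x = (\<Sum>i<n. x)"

definition is_basis3 :: "G \<Rightarrow> G \<Rightarrow> G \<Rightarrow> bool" where
  "is_basis3 e1 e2 e3 \<longleftrightarrow>
     bij_betw (\<lambda>(a,b,c). nsmul a e1 + nsmul b e2 + nsmul c e3)
              ({0..<3} \<times> {0..<3} \<times> {0..<3}) (UNIV :: G set)"

definition zero_sum :: "'a::comm_monoid_add multiset \<Rightarrow> bool" where
  "zero_sum S \<longleftrightarrow> sum_mset S = 0"

definition atom :: "'a::comm_monoid_add multiset \<Rightarrow> bool" where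
  "atom A \<longleftrightarrow> A \<noteq> {#} \<and> zero_sum A \<and>
     \<not> (\<exists>B C. A = B + C \<and> B \<noteq> {#} \<and> C \<noteq> {#} \<and> zero_sum B \<and> zero_sum C)"

definition Lset :: "'a::comm_monoid_add multiset \<Rightarrow> nat set" where
  "Lset B = {k. \<exists>xs. length xs = k \<and> (\<forall>A\<in>set xs. atom A) \<and> sum_list xs = B}"

end

theory Submission
  imports Defs
begin

text \<open>Every atom dividing a power of \<open>U = e1^2 e2^2 e3^2 e0\<close> is a triple \<open>x^3\<close>, \<open>U\<close> itself,
  or \<open>V = e1 e2 e3 e0^2\<close>: an atom with all multiplicities below 3 is determined by its
  \<open>e0\<close>-multiplicity \<open>d\<close>, the other multiplicities being \<open>\<equiv> -d (mod 3)\<close>. These atoms have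
  lengths 3, 7 and 5, all odd and between 3 and 7, so a factorization of \<open>U^(3k)\<close> (of length
  \<open>21k\<close>) into \<open>n\<close> atoms has \<open>3k \<le> n \<le> 7k\<close> and \<open>n \<equiv> k (mod 2)\<close>. Conversely \<open>U^3\<close> has
  the factorizations \<open>U\<cdot>U\<cdot>U\<close>, \<open>U\<cdot>e1^3\<cdot>e2^3\<cdot>e3^3\<cdot>V\<close> and \<open>(e1^3)^2(e2^3)^2(e3^3)^2e0^3\<close> of
  lengths 3, 5, 7, and lengths add under multiplication.\<close>

lemma add_self_three_G: "(x::G) + x + x = 0"
proof -
  have "(3::3) * a = 0" for a :: 3
  proof -
    have "(3::3) = 0" by simp
    then show ?thesis by (metis mult_zero_left)
  qed
  then show ?thesis by (cases x) (simp add: zero_prod_def)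
qed

lemma nsmul_Suc: "nsmul (Suc n) x = x + nsmul n x"
  by (simp add: nsmul_def add.commute)

lemma nsmul_add: "nsmul (m + n) x = nsmul m x + nsmul n x"
  by (induction m) (simp_all add: nsmul_Suc add.assoc, simp add: nsmul_def)

lemma nsmul_add_distrib: "nsmul n (x + y) = nsmul n x + nsmul n y"
  by (simp add: nsmul_def sum.distrib)

lemma nsmul_three: "nsmul 3 (x::G) = 0"
  using add_self_three_G[of x] by (simp add: numeral_3_eq_3 nsmul_Suc add.assoc nsmul_def)

lemma nsmul_mod_three: "nsmul n (x::G) = nsmul (n mod 3) x"
proof -
  have "nsmul (3 * q) x = 0" for q
    by (induction q) (simp_all add: nsmul_add nsmul_three, simp add: nsmul_def)
  then show ?thesis
    using nsmul_add[of "3 * (n div 3)" "n mod 3" x] by simp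
qed

lemma sum_mset_replicate_mset_nsmul: "sum_mset (replicate_mset n x) = nsmul n x"
  by (induction n) (simp_all add: nsmul_Suc, simp add: nsmul_def)

lemma atom_iff_minimal:
  fixes A :: "'a::comm_monoid_add multiset"
  shows "atom A \<longleftrightarrow> A \<noteq> {#} \<and> zero_sum A \<and> (\<forall>B. B \<subset># A \<longrightarrow> B \<noteq> {#} \<longrightarrow> \<not> zero_sum B)"
proof -
  have "(\<exists>B C. A = B + C \<and> B \<noteq> {#} \<and> C \<noteq> {#} \<and> zero_sum B \<and> zero_sum C)
      \<longleftrightarrow> (\<exists>B. B \<subset># A \<and> B \<noteq> {#} \<and> zero_sum B)" if "zero_sum A"
  proof
    assume "\<exists>B C. A = B + C \<and> B \<noteq> {#} \<and> C \<noteq> {#} \<and> zero_sum B \<and> zero_sum C"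
    then show "\<exists>B. B \<subset># A \<and> B \<noteq> {#} \<and> zero_sum B"
      by (metis add_cancel_right_right subset_mset.less_le mset_subset_eq_add_left)
  next
    assume "\<exists>B. B \<subset># A \<and> B \<noteq> {#} \<and> zero_sum B"
    then obtain B where B: "B \<subset># A" "B \<noteq> {#}" "zero_sum B" by blast
    then have split: "A = B + (A - B)"
      by (simp add: subset_mset.less_imp_le)
    with B(1) have "A - B \<noteq> {#}"
      by (metis add_0_right subset_mset.less_irrefl)
    moreover have "zero_sum (A - B)"
      using that B(3) split unfolding zero_sum_def by (metis add_0 sum_mset.union)
    ultimately show "\<exists>B C. A = B + C \<and> B \<noteq> {#} \<and> C \<noteq> {#} \<and> zero_sum B \<and> zero_sum C"
      using B split by blast
  qed
  then show ?thesis unfolding atom_def by blast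
qed

lemma atom_eq_triple:
  fixes A :: "'a::comm_monoid_add multiset"
  assumes "atom A" "x + x + x = 0" "3 \<le> count A x"
  shows "A = {#x, x, x#}"
proof (rule ccontr)
  assume "A \<noteq> {#x, x, x#}"
  moreover have "{#x, x, x#} \<subseteq># A"
    using assms(3) by (simp add: subseteq_mset_def)
  ultimately have "{#x, x, x#} \<subset># A"
    by (simp add: subset_mset.less_le)
  moreover have "zero_sum {#x, x, x#}"
    using assms(2) by (simp add: zero_sum_def add.assoc[symmetric])
  ultimately show False
    using assms(1) by (auto simp: atom_iff_minimal)
qed

lemma size_sum_list_bounds:
  fixes xs :: "'a multiset list"
  assumes "\<forall>A \<in> set xs. size A \<in> {3, 5, 7}"
  shows "3 * length xs \<le> size (sum_list xs) \<and> size (sum_list xs) \<le> 7 * length xs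
    \<and> even (size (sum_list xs) + length xs)"
  using assms by (induction xs) auto

lemma length_in_Lset_sum_list: "\<forall>A \<in> set xs. atom A \<Longrightarrow> length xs \<in> Lset (sum_list xs)"
  unfolding Lset_def by blast

lemma Lset_add: "m \<in> Lset B \<Longrightarrow> n \<in> Lset C \<Longrightarrow> m + n \<in> Lset (B + C)"
  unfolding Lset_def by (clarsimp, metis length_append sum_list_append Un_iff set_append)

lemma less_three_cases: "(x::nat) < 3 \<longleftrightarrow> x = 0 \<or> x = 1 \<or> x = 2"
  by auto

lemma small_zero_sum_residues:
  fixes a b c d :: nat
  assumes "a < 3" "b < 3" "c < 3" "d < 3"
    and "(a + d) mod 3 = 0" "(b + d) mod 3 = 0" "(c + d) mod 3 = 0"
  shows "(a, b, c, d) = (0, 0, 0, 0) \<or> (a, b, c, d) = (2, 2, 2, 1) \<or> (a, b, c, d) = (1, 1, 1, 2)"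
  using assms unfolding less_three_cases by (elim disjE) simp_all

locale C3_basis =
  fixes e1 e2 e3 :: G
  assumes basis: "is_basis3 e1 e2 e3"
begin

definition e0 :: G where "e0 = e1 + e2 + e3"

definition lincomb :: "nat \<Rightarrow> nat \<Rightarrow> nat \<Rightarrow> G" where
  "lincomb a b c = nsmul a e1 + nsmul b e2 + nsmul c e3"

lemma lincomb_eq_iff:
  assumes "a < 3" "b < 3" "c < 3" "a' < 3" "b' < 3" "c' < 3"
  shows "lincomb a b c = lincomb a' b' c' \<longleftrightarrow> a = a' \<and> b = b' \<and> c = c'"
proof -
  have "inj_on (\<lambda>(a, b, c). lincomb a b c) ({0..<3} \<times> {0..<3} \<times> {0..<3})"
    using basis unfolding is_basis3_def bij_betw_def lincomb_def by simp
  then show ?thesis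
    using assms by (auto dest: inj_onD[of _ _ "(a, b, c)" "(a', b', c')"])
qed

lemma lincomb_eq_zero_iff:
  "lincomb a b c = 0 \<longleftrightarrow> a mod 3 = 0 \<and> b mod 3 = 0 \<and> c mod 3 = 0"
proof -
  have "lincomb a b c = lincomb (a mod 3) (b mod 3) (c mod 3)"
    unfolding lincomb_def by (metis nsmul_mod_three)
  moreover have "lincomb 0 0 0 = 0"
    by (simp add: lincomb_def nsmul_def)
  ultimately have "lincomb a b c = 0 \<longleftrightarrow> lincomb (a mod 3) (b mod 3) (c mod 3) = lincomb 0 0 0"
    by simp
  also have "\<dots> \<longleftrightarrow> a mod 3 = 0 \<and> b mod 3 = 0 \<and> c mod 3 = 0"
    by (rule lincomb_eq_iff) simp_all
  finally show ?thesis .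
qed

lemma generators_distinct [simp]:
  "e1 \<noteq> e2" "e1 \<noteq> e3" "e2 \<noteq> e3" "e1 \<noteq> e0" "e2 \<noteq> e0" "e3 \<noteq> e0"
  "e2 \<noteq> e1" "e3 \<noteq> e1" "e3 \<noteq> e2" "e0 \<noteq> e1" "e0 \<noteq> e2" "e0 \<noteq> e3"
proof -
  have "distinct [lincomb 1 0 0, lincomb 0 1 0, lincomb 0 0 1, lincomb 1 1 1]"
    by (simp add: lincomb_eq_iff)
  moreover have "e1 = lincomb 1 0 0" "e2 = lincomb 0 1 0" "e3 = lincomb 0 0 1" "e0 = lincomb 1 1 1"
    by (simp_all add: lincomb_def e0_def nsmul_def)
  ultimately show "e1 \<noteq> e2" "e1 \<noteq> e3" "e2 \<noteq> e3" "e1 \<noteq> e0" "e2 \<noteq> e0" "e3 \<noteq> e0"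
    "e2 \<noteq> e1" "e3 \<noteq> e1" "e3 \<noteq> e2" "e0 \<noteq> e1" "e0 \<noteq> e2" "e0 \<noteq> e3"
    by (simp_all only: distinct.simps set_simps insert_iff empty_iff) metis+
qed

text \<open>\<open>seq a b c d\<close> is the sequence \<open>e1^a e2^b e3^c e0^d\<close>; thus \<open>U = seq 2 2 2 1\<close>.\<close>

definition seq :: "nat \<Rightarrow> nat \<Rightarrow> nat \<Rightarrow> nat \<Rightarrow> G multiset" where
  "seq a b c d = replicate_mset a e1 + replicate_mset b e2 + replicate_mset c e3 + replicate_mset d e0"

lemma count_seq [simp]:
  "count (seq a b c d) e1 = a" "count (seq a b c d) e2 = b"
  "count (seq a b c d) e3 = c" "count (seq a b c d) e0 = d"
  by (simp_all add: seq_def)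

lemma size_seq [simp]: "size (seq a b c d) = a + b + c + d"
  by (simp add: seq_def)

lemma set_mset_seq: "set_mset (seq a b c d) \<subseteq> {e1, e2, e3, e0}"
  by (auto simp: seq_def split: if_splits)

lemma seq_eq_empty_iff: "seq a b c d = {#} \<longleftrightarrow> a + b + c + d = 0"
  by (metis size_seq size_eq_0_iff_empty)

lemma count_seq_le: "count (seq a b c d) x \<le> max (max a b) (max c d)"
proof (cases "x \<in> {e1, e2, e3, e0}")
  case False
  then have "x \<notin># seq a b c d"
    using set_mset_seq by blast
  then show ?thesis
    by (simp add: not_in_iff)
qed auto

lemma seq_add: "seq a b c d + seq a' b' c' d' = seq (a + a') (b + b') (c + c') (d + d')"
  by (simp add: seq_def multiset_eq_iff)

lemma seq_counts:
  assumes "set_mset A \<subseteq> {e1, e2, e3, e0}"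
  shows "A = seq (count A e1) (count A e2) (count A e3) (count A e0)"
proof (rule multiset_eqI)
  fix x
  show "count A x = count (seq (count A e1) (count A e2) (count A e3) (count A e0)) x"
  proof (cases "x \<in> {e1, e2, e3, e0}")
    case False
    with assms show ?thesis
      by (auto simp: seq_def not_in_iff[symmetric])
  qed auto
qed

lemma zero_sum_seq_iff:
  "zero_sum (seq a b c d) \<longleftrightarrow> (a + d) mod 3 = 0 \<and> (b + d) mod 3 = 0 \<and> (c + d) mod 3 = 0"
proof -
  have "sum_mset (seq a b c d) = lincomb (a + d) (b + d) (c + d)"
    by (simp add: seq_def sum_mset_replicate_mset_nsmul lincomb_def e0_def nsmul_add nsmul_add_distrib ac_simps)
  then show ?thesis
    by (simp add: zero_sum_def lincomb_eq_zero_iff)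
qed

lemma zero_sum_small_cases:
  assumes "zero_sum B" "B \<noteq> {#}" "set_mset B \<subseteq> {e1, e2, e3, e0}" "\<forall>x. count B x < 3"
  shows "B = seq 2 2 2 1 \<or> B = seq 1 1 1 2"
proof -
  obtain a b c d where B: "B = seq a b c d" and small: "a < 3" "b < 3" "c < 3" "d < 3"
    using seq_counts[OF assms(3)] assms(4) by blast
  have "(a + d) mod 3 = 0" "(b + d) mod 3 = 0" "(c + d) mod 3 = 0"
    using assms(1) B by (simp_all add: zero_sum_seq_iff)
  moreover have "(a, b, c, d) \<noteq> (0, 0, 0, 0)"
    using assms(2) B by (simp add: seq_eq_empty_iff)
  ultimately have "(a, b, c, d) = (2, 2, 2, 1) \<or> (a, b, c, d) = (1, 1, 1, 2)"
    using small_zero_sum_residues[OF small] by metis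
  then show ?thesis
    using B by auto
qed

lemma atom_cases:
  assumes "atom A" "set_mset A \<subseteq> {e1, e2, e3, e0}"
  obtains x where "A = {#x, x, x#}" | "A = seq 2 2 2 1" | "A = seq 1 1 1 2"
proof (cases "\<exists>x. 3 \<le> count A x")
  case True
  then show ?thesis
    using that atom_eq_triple[OF assms(1) add_self_three_G] by blast
next
  case False
  then show ?thesis
    using that zero_sum_small_cases assms unfolding atom_def by (meson not_le)
qed

lemma atomI_no_small_proper_zero_sum:
  assumes "zero_sum A" "A \<noteq> {#}" "set_mset A \<subseteq> {e1, e2, e3, e0}"
    and "\<And>B x. B \<subset># A \<Longrightarrow> count B x < 3"
    and "\<not> seq 2 2 2 1 \<subset># A" "\<not> seq 1 1 1 2 \<subset># A"
  shows "atom A"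
  unfolding atom_iff_minimal
proof (intro conjI allI impI assms(1,2) notI)
  fix B assume B: "B \<subset># A" "B \<noteq> {#}" "zero_sum B"
  have "set_mset B \<subseteq> {e1, e2, e3, e0}"
    using B(1) assms(3) by (meson order_trans set_mset_mono subset_mset.less_imp_le)
  then show False
    using zero_sum_small_cases[OF B(3,2)] assms(4)[OF B(1)] assms(5,6) B(1) by blast
qed

lemma atom_seq_2221: "atom (seq 2 2 2 1)"
proof (rule atomI_no_small_proper_zero_sum)
  fix B x assume "B \<subset># seq 2 2 2 1"
  then have "count B x \<le> count (seq 2 2 2 1) x"
    by (simp add: mset_subset_eq_count subset_mset.less_imp_le)
  then show "count B x < 3"
    using count_seq_le[of 2 2 2 1 x] by simp
next
  show "\<not> seq 1 1 1 2 \<subset># seq 2 2 2 1"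
    using mset_subset_eq_count[of "seq 1 1 1 2" "seq 2 2 2 1" e0] by (auto dest: subset_mset.less_imp_le)
qed (simp_all add: zero_sum_seq_iff seq_eq_empty_iff set_mset_seq)

lemma atom_seq_1112: "atom (seq 1 1 1 2)"
proof (rule atomI_no_small_proper_zero_sum)
  fix B x assume "B \<subset># seq 1 1 1 2"
  then have "count B x \<le> count (seq 1 1 1 2) x"
    by (simp add: mset_subset_eq_count subset_mset.less_imp_le)
  then show "count B x < 3"
    using count_seq_le[of 1 1 1 2 x] by simp
next
  show "\<not> seq 2 2 2 1 \<subset># seq 1 1 1 2"
    using mset_subset_eq_count[of "seq 2 2 2 1" "seq 1 1 1 2" e1] by (auto dest: subset_mset.less_imp_le)
qed (simp_all add: zero_sum_seq_iff seq_eq_empty_iff set_mset_seq)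

lemma atom_triple:
  assumes "x \<in> {e1, e2, e3, e0}"
  shows "atom {#x, x, x#}"
proof (rule atomI_no_small_proper_zero_sum)
  fix B y assume "B \<subset># {#x, x, x#}"
  then show "count B y < 3"
    using mset_subset_size count_le_size[of B y] by fastforce
next
  show "\<not> seq 2 2 2 1 \<subset># {#x, x, x#}" "\<not> seq 1 1 1 2 \<subset># {#x, x, x#}"
    using mset_subset_size by fastforce+
qed (use assms add_self_three_G[of x] in \<open>auto simp: zero_sum_def add.assoc[symmetric]\<close>)

lemma Lset_size_bounds:
  assumes "n \<in> Lset B" "set_mset B \<subseteq> {e1, e2, e3, e0}"
  shows "3 * n \<le> size B \<and> size B \<le> 7 * n \<and> even (size B + n)"
proof -
  obtain xs where xs: "length xs = n" "\<forall>A \<in> set xs. atom A" "sum_list xs = B"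
    using assms(1) unfolding Lset_def by blast
  have "size A \<in> {3, 5, 7}" if "A \<in> set xs" for A
  proof -
    have "atom A"
      using xs(2) that by blast
    moreover have "set_mset A \<subseteq> {e1, e2, e3, e0}"
      using that assms(2) unfolding xs(3)[symmetric] set_mset_sum_list by blast
    ultimately show ?thesis
      by (cases rule: atom_cases) auto
  qed
  then show ?thesis
    using size_sum_list_bounds[of xs] xs by simp
qed

lemma Lset_seq_6663:
  assumes "t \<le> 2"
  shows "3 + 2 * t \<in> Lset (seq 6 6 6 3)"
proof -
  let ?x = "seq 2 2 2 1" and ?y = "seq 1 1 1 2"
  let ?t1 = "{#e1, e1, e1#}" and ?t2 = "{#e2, e2, e2#}" and ?t3 = "{#e3, e3, e3#}"
    and ?t0 = "{#e0, e0, e0#}"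
  have atoms: "atom ?x" "atom ?y" "atom ?t1" "atom ?t2" "atom ?t3" "atom ?t0"
    by (fact atom_seq_2221, fact atom_seq_1112, (rule atom_triple, simp)+)
  have sums: "sum_list [?x, ?x, ?x] = seq 6 6 6 3"
    "sum_list [?x, ?t1, ?t2, ?t3, ?y] = seq 6 6 6 3"
    "sum_list [?t1, ?t1, ?t2, ?t2, ?t3, ?t3, ?t0] = seq 6 6 6 3"
    by (simp_all add: seq_def multiset_eq_iff)
  have lengths: "3 \<in> Lset (seq 6 6 6 3)" "5 \<in> Lset (seq 6 6 6 3)" "7 \<in> Lset (seq 6 6 6 3)"
    using length_in_Lset_sum_list[of "[?x, ?x, ?x]"]
      length_in_Lset_sum_list[of "[?x, ?t1, ?t2, ?t3, ?y]"]
      length_in_Lset_sum_list[of "[?t1, ?t1, ?t2, ?t2, ?t3, ?t3, ?t0]"]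
    unfolding sums using atoms by (simp_all add: numeral_eq_Suc)
  from assms consider "t = 0" | "t = 1" | "t = 2"
    by linarith
  then show ?thesis
    using lengths by cases simp_all
qed

lemma Lset_seq_multiple:
  assumes "j \<le> 2 * k"
  shows "3 * k + 2 * j \<in> Lset (seq (6 * k) (6 * k) (6 * k) (3 * k))"
  using assms
proof (induction k arbitrary: j)
  case 0
  then show ?case
    using length_in_Lset_sum_list[of "[]"] by (simp add: seq_def)
next
  case (Suc k)
  define t where "t = j - min j (2 * k)"
  have "t \<le> 2"
    using Suc.prems by (simp add: t_def)
  then have "(3 + 2 * t) + (3 * k + 2 * min j (2 * k))
      \<in> Lset (seq 6 6 6 3 + seq (6 * k) (6 * k) (6 * k) (3 * k))"
    by (intro Lset_add Lset_seq_6663 Suc.IH) (simp_all add: min_le_iff_disj)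
  moreover have "(3 + 2 * t) + (3 * k + 2 * min j (2 * k)) = 3 * Suc k + 2 * j"
    by (simp add: t_def)
  ultimately show ?case
    by (simp add: seq_add)
qed

lemma Lset_seq_multiple_eq:
  "Lset (seq (6 * k) (6 * k) (6 * k) (3 * k)) = {3 * k + 2 * j | j. j \<le> 2 * k}"
proof (intro equalityI subsetI)
  fix n assume "n \<in> Lset (seq (6 * k) (6 * k) (6 * k) (3 * k))"
  from Lset_size_bounds[OF this set_mset_seq]
  have "3 * n \<le> 21 * k" "21 * k \<le> 7 * n" "even (21 * k + n)"
    by simp_all
  then have le: "3 * k \<le> n" "n \<le> 7 * k"
    by linarith+
  then have "21 * k + n = (n - 3 * k) + 2 * (12 * k)"
    by simp
  with \<open>even (21 * k + n)\<close> have "even ((n - 3 * k) + 2 * (12 * k))"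
    by (simp only:)
  then have "even (n - 3 * k)"
    by (metis dvd_add_times_triv_right_iff mult.commute)
  then obtain j where "n - 3 * k = 2 * j"
    by (rule evenE)
  with le have "n = 3 * k + 2 * j" "j \<le> 2 * k"
    by linarith+
  then show "n \<in> {3 * k + 2 * j | j. j \<le> 2 * k}"
    by blast
qed (auto intro: Lset_seq_multiple)

end

theorem lemma5p4:
  fixes e1 e2 e3 :: G and k :: nat
  assumes "is_basis3 e1 e2 e3"
    and "k \<ge> 1"
  defines "U \<equiv> {#e1, e1, e2, e2, e3, e3, e1 + e2 + e3#}"
  shows "Lset (repeat_mset (3 * k) U) = {3 * k + 2 * j | j. j \<le> 2 * k}
    \<and> real (Max (Lset (repeat_mset (3 * k) U))) / real (Min (Lset (repeat_mset (3 * k) U))) = 7 / 3"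
proof -
  interpret C3_basis e1 e2 e3
    using assms(1) by unfold_locales
  have "repeat_mset (3 * k) U = seq (6 * k) (6 * k) (6 * k) (3 * k)"
    unfolding U_def e0_def[symmetric] by (simp add: seq_def multiset_eq_iff)
  then have L: "Lset (repeat_mset (3 * k) U) = (\<lambda>j. 3 * k + 2 * j) ` {..2 * k}"
    by (auto simp: Lset_seq_multiple_eq)
  have "Max ((\<lambda>j. 3 * k + 2 * j) ` {..2 * k}) = 7 * k"
    by (rule Max_eqI) auto
  moreover have "Min ((\<lambda>j. 3 * k + 2 * j) ` {..2 * k}) = 3 * k"
    by (rule Min_eqI) auto
  ultimately show ?thesis
    using assms(2) unfolding L by auto
qed

end
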